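(* Let $q\ge 2$, $n\ge 1$ and $d_Z\ge 1$ be integers, and let ${\bf c}_1,\dots,{\bf c}_m$ be distinct strings in $\{0,1,\dots,q-1\}^n$. Let $A$ be the real matrix with $m$ columns (indexed by $k=1,\dots,m$) whose rows are: one row with all entries equal to $1$; and, for every ${\bf z}\in\{0,\dots,q-1\}^n$ with $1\le \mathrm{wt}({\bf z})\le d_Z-1$, two rows $({\bf z},0)$ and $({\bf z},1)$ with entries $A_{({\bf z},0),k}=\mathrm{Re}\,\langle {\bf c}_k|Z^{\bf z}|{\bf c}_k\rangle=\cos(2\pi\,{\bf z}^T{\bf c}_k/q)$ and $A_{({\bf z},1),k}=\mathrm{Im}\,\langle {\bf c}_k|Z^{\bf z}|{\bf c}_k\rangle=\sin(2\pi\,{\bf z}^T{\bf c}_k/q)$. Let ${\bf x}=(x_1,\dots,x_m)^T$ be a nonzero real vector with $A{\bf x}=0$, and define $x_k^+=\max\{x_k,0\}$, $x_k^-=\max\{-x_k,0\}$, $x=\sum_{k=1}^m x_k^+$, and $$|0_L\rangle=\frac{1}{\sqrt{x}}\sum_{k=1}^m\sqrt{x_k^+}\,|{\bf c}_k\rangle,\qquad |1_L\rangle=\frac{1}{\sqrt{x}}\sum_{k=1}^m\sqrt{x_k^-}\,|{\bf c}_k\rangle.$$ Then $\langle 0_L|P|0_L\rangle=\langle 1_L|P|1_L\rangle$ for every diagonal Pauli operator $P=Z^{\bf z}$ with $\mathrm{wt}({\bf z})\le d_Z-1$.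
   Context: Let $\omega=e^{2\pi i/q}$. On $\mathbb{C}^q$ with orthonormal basis $|0\rangle,\dots,|q-1\rangle$, define the generalized Pauli matrices $Z=\sum_{j=0}^{q-1}\omega^j|j\rangle\langle j|$ and $X=\sum_{j\in\mathbb{Z}_q}|j\rangle\langle j+1|$ (indices mod $q$). For ${\bf z}=(z_1,\dots,z_n)$, $Z^{\bf z}=Z^{z_1}\otimes\cdots\otimes Z^{z_n}$ is the diagonal Pauli operator of weight $\mathrm{wt}({\bf z})$, the Hamming weight (number of nonzero entries). For a string ${\bf c}=(c_1,\dots,c_n)$, $|{\bf c}\rangle=|c_1\rangle\otimes\cdots\otimes|c_n\rangle$, and ${\bf z}^T{\bf c}=\sum_i z_ic_i$. *)

theory Defs
  imports Complex_Main
begin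

text \<open>Strings in {0,...,q-1}^n are functions nat => nat with values < q on {0..<n}
  and value 0 outside (canonical representatives).\<close>
definition strings :: "nat \<Rightarrow> nat \<Rightarrow> (nat \<Rightarrow> nat) set" where
  "strings q n = {c. (\<forall>i<n. c i < q) \<and> (\<forall>i\<ge>n. c i = 0)}"

definition wt :: "nat \<Rightarrow> (nat \<Rightarrow> nat) \<Rightarrow> nat" where
  "wt n z = card {i\<in>{..<n}. z i \<noteq> 0}"

definition dotp :: "nat \<Rightarrow> (nat \<Rightarrow> nat) \<Rightarrow> (nat \<Rightarrow> nat) \<Rightarrow> nat" where
  "dotp n z c = (\<Sum>i<n. z i * c i)"

definition omega :: "nat \<Rightarrow> complex" where
  "omega q = exp (2 * pi * \<i> / of_nat q)"

text \<open>Vectors of (C^q)^{\<otimes> n} as functions on basis strings.\<close>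
definition ket :: "(nat \<Rightarrow> nat) \<Rightarrow> (nat \<Rightarrow> nat) \<Rightarrow> complex" where
  "ket c = (\<lambda>b. if b = c then 1 else 0)"

text \<open>Z^z = Z^{z_1} \<otimes> ... \<otimes> Z^{z_n}, acting diagonally: Z^z |b> = prod_i omega^(z_i b_i) |b>.\<close>
definition Zop :: "nat \<Rightarrow> nat \<Rightarrow> (nat \<Rightarrow> nat) \<Rightarrow> ((nat \<Rightarrow> nat) \<Rightarrow> complex) \<Rightarrow> ((nat \<Rightarrow> nat) \<Rightarrow> complex)" where
  "Zop q n z \<psi> = (\<lambda>b. (\<Prod>i<n. omega q ^ (z i * b i)) * \<psi> b)"

definition braket :: "nat \<Rightarrow> nat \<Rightarrow> ((nat \<Rightarrow> nat) \<Rightarrow> complex) \<Rightarrow> ((nat \<Rightarrow> nat) \<Rightarrow> complex) \<Rightarrow> complex" where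
  "braket q n \<psi> \<phi> = (\<Sum>b\<in>strings q n. cnj (\<psi> b) * \<phi> b)"

text \<open>Rows of the matrix A: None is the all-ones row; Some (z, False) / Some (z, True)
  are the rows (z,0) / (z,1) for 1 <= wt z <= d_Z - 1.\<close>
definition Arows :: "nat \<Rightarrow> nat \<Rightarrow> nat \<Rightarrow> ((nat \<Rightarrow> nat) \<times> bool) option set" where
  "Arows q n dZ = insert None
     {Some (z, b) | z b. z \<in> strings q n \<and> 1 \<le> wt n z \<and> wt n z \<le> dZ - 1}"

definition Aent :: "nat \<Rightarrow> nat \<Rightarrow> (nat \<Rightarrow> nat \<Rightarrow> nat) \<Rightarrow> ((nat \<Rightarrow> nat) \<times> bool) option \<Rightarrow> nat \<Rightarrow> real" where
  "Aent q n c r k = (case r of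
      None \<Rightarrow> 1
    | Some (z, False) \<Rightarrow> cos (2 * pi * real (dotp n z (c k)) / real q)
    | Some (z, True) \<Rightarrow> sin (2 * pi * real (dotp n z (c k)) / real q))"

definition pospart :: "real \<Rightarrow> real" where "pospart t = max t 0"
definition negpart :: "real \<Rightarrow> real" where "negpart t = max (- t) 0"

definition logical0 :: "nat \<Rightarrow> (nat \<Rightarrow> nat \<Rightarrow> nat) \<Rightarrow> (nat \<Rightarrow> real) \<Rightarrow> (nat \<Rightarrow> nat) \<Rightarrow> complex" where
  "logical0 m c x = (\<lambda>b. complex_of_real (1 / sqrt (\<Sum>k<m. pospart (x k)))
      * (\<Sum>k<m. complex_of_real (sqrt (pospart (x k))) * ket (c k) b))"

definition logical1 :: "nat \<Rightarrow> (nat \<Rightarrow> nat \<Rightarrow> nat) \<Rightarrow> (nat \<Rightarrow> real) \<Rightarrow> (nat \<Rightarrow> nat) \<Rightarrow> complex" where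
  "logical1 m c x = (\<lambda>b. complex_of_real (1 / sqrt (\<Sum>k<m. pospart (x k)))
      * (\<Sum>k<m. complex_of_real (sqrt (negpart (x k))) * ket (c k) b))"

end

theory Submission
  imports Defs "HOL-Library.FuncSet"
begin

text \<open>Both logical states are superpositions of the distinct basis vectors |c_k> with real
  amplitudes, and Z^z is diagonal with eigenvalue w^(z.c) on |c>, w = exp(2 pi i/q). Hence
  <0_L|Z^z|0_L> - <1_L|Z^z|1_L> = (1/x) sum_k (x_k^+ - x_k^-) w^(z.c_k) = (1/x) sum_k x_k w^(z.c_k),
  whose real and imaginary parts are the rows (z,0) and (z,1) of A x = 0 (the all-ones row when
  z = 0).\<close>

lemma finite_strings: "finite (strings q n)"
proof -
  let ?extend = "\<lambda>f i. if i < n then f i else 0"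
  have "strings q n \<subseteq> ?extend ` (PiE {..<n} (\<lambda>_. {..<q}))"
  proof
    fix c assume c: "c \<in> strings q n"
    then have "c = ?extend (restrict c {..<n})"
      by (auto simp: strings_def fun_eq_iff)
    moreover have "restrict c {..<n} \<in> PiE {..<n} (\<lambda>_. {..<q})"
      using c by (auto simp: strings_def)
    ultimately show "c \<in> ?extend ` (PiE {..<n} (\<lambda>_. {..<q}))" by blast
  qed
  then show ?thesis by (rule finite_subset) (simp add: finite_PiE)
qed

lemma omega_power: "omega q ^ k = cis (2 * pi * real k / real q)"
proof -
  have "omega q ^ k = exp (of_nat k * (2 * pi * \<i> / of_nat q))"
    by (simp only: omega_def exp_of_nat_mult)
  then show ?thesis by (simp add: cis_conv_exp mult_ac)
qed

lemma Zop_apply: "Zop q n z \<psi> b = cis (2 * pi * real (dotp n z b) / real q) * \<psi> b"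
proof -
  have "(\<Prod>i<n. omega q ^ (z i * b i)) = omega q ^ dotp n z b"
    by (simp add: dotp_def power_sum)
  then show ?thesis by (simp add: Zop_def omega_power)
qed

lemma sum_ket_at:
  fixes m l :: nat
  assumes "inj_on c {..<m}" "l < m"
  shows "(\<Sum>k<m. a k * ket (c k) (c l)) = a l"
proof -
  have "(\<Sum>k<m. a k * ket (c k) (c l)) = (\<Sum>k<m. if k = l then a k else 0)"
    using assms by (intro sum.cong) (auto simp: ket_def inj_on_def)
  also have "\<dots> = a l"
    using assms(2) by (subst sum.delta) auto
  finally show ?thesis .
qed

lemma diagonal_expectation_sum_ket:
  fixes a :: "nat \<Rightarrow> complex"
  assumes "finite S" "\<forall>k<m. c k \<in> S" "inj_on c {..<m}"
  defines "\<psi> \<equiv> \<lambda>b. \<Sum>k<m. a k * ket (c k) b"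
  shows "(\<Sum>b\<in>S. cnj (\<psi> b) * (g b * \<psi> b)) = (\<Sum>l<m. of_real ((cmod (a l))\<^sup>2) * g (c l))"
proof -
  have "(\<Sum>b\<in>S. cnj (\<psi> b) * (g b * \<psi> b))
      = (\<Sum>b\<in>S. \<Sum>l<m. if b = c l then cnj (\<psi> b) * g b * a l else 0)"
  proof (intro sum.cong refl)
    fix b
    have "cnj (\<psi> b) * (g b * \<psi> b) = (\<Sum>l<m. cnj (\<psi> b) * g b * (a l * ket (c l) b))"
      unfolding sum_distrib_left[symmetric] by (simp only: \<psi>_def mult.assoc)
    also have "\<dots> = (\<Sum>l<m. if b = c l then cnj (\<psi> b) * g b * a l else 0)"
      by (intro sum.cong refl) (simp add: ket_def)
    finally show "cnj (\<psi> b) * (g b * \<psi> b) = (\<Sum>l<m. if b = c l then cnj (\<psi> b) * g b * a l else 0)" .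
  qed
  also have "\<dots> = (\<Sum>l<m. \<Sum>b\<in>S. if b = c l then cnj (\<psi> b) * g b * a l else 0)"
    by (rule sum.swap)
  also have "\<dots> = (\<Sum>l<m. cnj (a l) * g (c l) * a l)"
    using assms by (intro sum.cong refl) (simp add: \<psi>_def sum_ket_at)
  also have "\<dots> = (\<Sum>l<m. of_real ((cmod (a l))\<^sup>2) * g (c l))"
    by (intro sum.cong refl) (simp only: complex_norm_square mult_ac)
  finally show ?thesis .
qed

lemma expectation_Zop_sum_ket:
  fixes a :: "nat \<Rightarrow> complex"
  assumes "\<forall>k<m. c k \<in> strings q n" "inj_on c {..<m}"
  defines "\<psi> \<equiv> \<lambda>b. \<Sum>k<m. a k * ket (c k) b"
  shows "braket q n \<psi> (Zop q n z \<psi>)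
       = (\<Sum>k<m. of_real ((cmod (a k))\<^sup>2) * cis (2 * pi * real (dotp n z (c k)) / real q))"
  unfolding braket_def Zop_apply \<psi>_def
  by (rule diagonal_expectation_sum_ket[OF finite_strings assms(1,2)])

lemma phase_sum_eq_0_if_null:
  assumes null: "\<forall>r\<in>Arows q n dZ. (\<Sum>k<m. Aent q n c r k * x k) = 0"
    and z: "z \<in> strings q n" "wt n z \<le> dZ - 1"
  shows "(\<Sum>k<m. of_real (x k) * cis (2 * pi * real (dotp n z (c k)) / real q)) = 0"
proof (cases "wt n z = 0")
  case True
  then have "dotp n z b = 0" for b
    by (auto simp: wt_def dotp_def)
  moreover have "(\<Sum>k<m. x k) = 0"
    using null by (auto simp: Arows_def Aent_def)
  ultimately show ?thesis
    by (simp flip: of_real_sum)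
next
  case False
  then have "Some (z, False) \<in> Arows q n dZ" "Some (z, True) \<in> Arows q n dZ"
    using z by (auto simp: Arows_def)
  then have "(\<Sum>k<m. cos (2 * pi * real (dotp n z (c k)) / real q) * x k) = 0"
    "(\<Sum>k<m. sin (2 * pi * real (dotp n z (c k)) / real q) * x k) = 0"
    using null by (fastforce simp: Aent_def)+
  then show ?thesis
    by (simp add: complex_eq_iff Re_sum Im_sum mult.commute)
qed

lemma logical_states_as_sum_ket:
  fixes m :: nat and x :: "nat \<Rightarrow> real"
  defines "N \<equiv> 1 / sqrt (\<Sum>k<m. pospart (x k))"
  shows "logical0 m c x = (\<lambda>b. \<Sum>k<m. of_real (N * sqrt (pospart (x k))) * ket (c k) b)"
    and "logical1 m c x = (\<lambda>b. \<Sum>k<m. of_real (N * sqrt (negpart (x k))) * ket (c k) b)"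
  by (simp_all add: logical0_def logical1_def N_def sum_distrib_left mult.assoc)

lemma cmod_of_real_mult_sqrt_square: "p \<ge> 0 \<Longrightarrow> (cmod (of_real (N * sqrt p)))\<^sup>2 = N\<^sup>2 * p"
  by (simp add: norm_mult power_mult_distrib)

lemma pospart_nonneg: "pospart t \<ge> 0"
  and negpart_nonneg: "negpart t \<ge> 0"
  and pospart_minus_negpart: "pospart t - negpart t = t"
  by (auto simp: pospart_def negpart_def)

lemma sum_pospart_minus_sum_negpart:
  "(\<Sum>k\<in>K. of_real (s * pospart (x k)) * w k) - (\<Sum>k\<in>K. of_real (s * negpart (x k)) * w k)
     = of_real s * (\<Sum>k\<in>K. of_real (x k) * w k)"
proof -
  have "(\<Sum>k\<in>K. of_real (s * pospart (x k)) * w k) - (\<Sum>k\<in>K. of_real (s * negpart (x k)) * w k)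
      = (\<Sum>k\<in>K. of_real (s * (pospart (x k) - negpart (x k))) * w k)"
    by (simp add: algebra_simps flip: sum_subtractf)
  then show ?thesis
    by (simp add: pospart_minus_negpart sum_distrib_left mult.assoc)
qed

theorem lemma1:
  fixes q n dZ m :: nat and c :: "nat \<Rightarrow> nat \<Rightarrow> nat" and x :: "nat \<Rightarrow> real"
  assumes "q \<ge> 2" and "n \<ge> 1" and "dZ \<ge> 1"
    and "\<forall>k<m. c k \<in> strings q n"
    and "inj_on c {..<m}"
    and "\<exists>k<m. x k \<noteq> 0"
    and "\<forall>r\<in>Arows q n dZ. (\<Sum>k<m. Aent q n c r k * x k) = 0"
  shows "\<forall>z\<in>strings q n. wt n z \<le> dZ - 1 \<longrightarrow>
     braket q n (logical0 m c x) (Zop q n z (logical0 m c x))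
   = braket q n (logical1 m c x) (Zop q n z (logical1 m c x))"
proof (intro ballI impI)
  fix z assume z: "z \<in> strings q n" "wt n z \<le> dZ - 1"
  define N where "N = 1 / sqrt (\<Sum>k<m. pospart (x k))"
  define \<phi> where "\<phi> k = cis (2 * pi * real (dotp n z (c k)) / real q)" for k
  have "braket q n (logical0 m c x) (Zop q n z (logical0 m c x))
      - braket q n (logical1 m c x) (Zop q n z (logical1 m c x))
      = (\<Sum>k<m. of_real (N\<^sup>2 * pospart (x k)) * \<phi> k) - (\<Sum>k<m. of_real (N\<^sup>2 * negpart (x k)) * \<phi> k)"
    unfolding logical_states_as_sum_ket N_def[symmetric] expectation_Zop_sum_ket[OF assms(4,5)]
    by (simp only: cmod_of_real_mult_sqrt_square pospart_nonneg negpart_nonneg \<phi>_def)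
  also have "\<dots> = of_real (N\<^sup>2) * (\<Sum>k<m. of_real (x k) * \<phi> k)"
    by (rule sum_pospart_minus_sum_negpart)
  also have "\<dots> = 0"
    using phase_sum_eq_0_if_null[OF assms(7) z] by (simp add: \<phi>_def)
  finally show "braket q n (logical0 m c x) (Zop q n z (logical0 m c x))
      = braket q n (logical1 m c x) (Zop q n z (logical1 m c x))" by simp
qed

end
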